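(* Let $J_1,J_2\ge 0$ and $\beta\ge 0$. Then every infinite-volume Gibbs measure $\mu$ of the plaquette orbital model on $\mathbb Z^2$ at inverse temperature $\beta$ satisfies $\mathbb E_\mu(\mathbf S_{\boldsymbol r})=0$ for every $\boldsymbol r\in\mathbb Z^2$.
   Context: On $\mathbb Z^2$ (unit vectors $\boldsymbol e_1,\boldsymbol e_2$) nearest-neighbour edges are typed as follows: the horizontal edge $\langle \boldsymbol r,\boldsymbol r+\boldsymbol e_1\rangle$ is an $x$-edge if $r_1$ is even and a $z$-edge if $r_1$ is odd; the vertical edge $\langle\boldsymbol r,\boldsymbol r+\boldsymbol e_2\rangle$ is an $x$-edge if $r_2$ is even and a $z$-edge if $r_2$ is odd. Spins $\mathbf S_{\boldsymbol r}=(S^x_{\boldsymbol r},S^z_{\boldsymbol r})$ are unit vectors in $\mathbb R^2$, with a priori measure $\nu$ = uniform measure on the unit circle (normalized to total mass $\sqrt{2\pi}$). For finite $\Lambda\subset\mathbb Z^2$ let $\mathcal H_\Lambda(\mathbf S)=-J_1\sum S^x_{\boldsymbol r}S^x_{\boldsymbol r'}-J_2\sum S^z_{\boldsymbol r}S^z_{\boldsymbol r'}$, the first sum over $x$-edges and the second over $z$-edges having at least one endpoint in $\Lambda$. An infinite-volume Gibbs measure at inverse temperature $\beta$ is a probability measure $\mu$ on configurations $(\mathbf S_{\boldsymbol r})_{\boldsymbol r\in\mathbb Z^2}$ such that for every finite $\Lambda$, the conditional distribution of $(\mathbf S_{\boldsymbol r})_{\boldsymbol r\in\Lambda}$ given $(\mathbf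 S_{\boldsymbol r})_{\boldsymbol r\notin\Lambda}$ has density proportional to $e^{-\beta\mathcal H_\Lambda(\mathbf S)}$ with respect to $\prod_{\boldsymbol r\in\Lambda}\nu(d\mathbf S_{\boldsymbol r})$ (DLR condition). *)

theory Defs
  imports "HOL-Probability.Probability"
begin

type_synonym site = "int \<times> int"
type_synonym spin = "real \<times> real"   \<comment> \<open>(S^x, S^z)\<close>
type_synonym config = "site \<Rightarrow> spin"

definition spin_apriori :: "spin measure" where
  "spin_apriori = scale_measure (ennreal (sqrt (2*pi) / (2*pi)))
     (distr (restrict_space lborel {0..<2*pi}) borel (\<lambda>\<theta>. (cos \<theta>, sin \<theta>)))"

definition config_space :: "config measure" where
  "config_space = Pi\<^sub>M UNIV (\<lambda>_. borel)"

text \<open>Bond energy of the edge from r to r'; isx = True means an x-edge (coupling J1 S^x S^x),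
  otherwise a z-edge (coupling J2 S^z S^z).\<close>
definition bond :: "real \<Rightarrow> real \<Rightarrow> bool \<Rightarrow> spin \<Rightarrow> spin \<Rightarrow> real" where
  "bond J1 J2 isx a b = (if isx then J1 * fst a * fst b else J2 * snd a * snd b)"

text \<open>Horizontal edges <r, r+e1> with at least one endpoint in Lambda (indexed by r);
  such an edge is an x-edge iff r_1 is even. Vertical edges <r, r+e2>: x-edge iff r_2 even.\<close>
definition hedges :: "site set \<Rightarrow> site set" where
  "hedges \<Lambda> = {r. r \<in> \<Lambda> \<or> (fst r + 1, snd r) \<in> \<Lambda>}"

definition vedges :: "site set \<Rightarrow> site set" where
  "vedges \<Lambda> = {r. r \<in> \<Lambda> \<or> (fst r, snd r + 1) \<in> \<Lambda>}"

definition hamiltonian :: "real \<Rightarrow> real \<Rightarrow> site set \<Rightarrow> config \<Rightarrow> real" where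
  "hamiltonian J1 J2 \<Lambda> S =
     - (\<Sum>r\<in>hedges \<Lambda>. bond J1 J2 (even (fst r)) (S r) (S (fst r + 1, snd r)))
     - (\<Sum>r\<in>vedges \<Lambda>. bond J1 J2 (even (snd r)) (S r) (S (fst r, snd r + 1)))"

definition merge_cfg :: "site set \<Rightarrow> config \<Rightarrow> config \<Rightarrow> config" where
  "merge_cfg \<Lambda> \<sigma> \<omega> = (\<lambda>r. if r \<in> \<Lambda> then \<sigma> r else \<omega> r)"

definition boltz :: "real \<Rightarrow> real \<Rightarrow> real \<Rightarrow> site set \<Rightarrow> config \<Rightarrow> config \<Rightarrow> real" where
  "boltz J1 J2 \<beta> \<Lambda> \<omega> \<sigma> = exp (- \<beta> * hamiltonian J1 J2 \<Lambda> (merge_cfg \<Lambda> \<sigma> \<omega>))"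

definition partition_fn :: "real \<Rightarrow> real \<Rightarrow> real \<Rightarrow> site set \<Rightarrow> config \<Rightarrow> real" where
  "partition_fn J1 J2 \<beta> \<Lambda> \<omega> =
     (\<integral>\<sigma>. boltz J1 J2 \<beta> \<Lambda> \<omega> \<sigma> \<partial>(Pi\<^sub>M \<Lambda> (\<lambda>_. spin_apriori)))"

definition outside_algebra :: "site set \<Rightarrow> config measure" where
  "outside_algebra \<Lambda> = sigma (space config_space)
     {{\<omega> \<in> space config_space. \<omega> r \<in> A} | r A. r \<notin> \<Lambda> \<and> A \<in> sets (borel :: spin measure)}"

definition is_gibbs :: "real \<Rightarrow> real \<Rightarrow> real \<Rightarrow> config measure \<Rightarrow> bool" where
  "is_gibbs J1 J2 \<beta> \<mu> \<longleftrightarrow>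
     prob_space \<mu> \<and> sets \<mu> = sets config_space \<and>
     (\<forall>\<Lambda>. finite \<Lambda> \<longrightarrow>
        (\<forall>A \<in> sets (Pi\<^sub>M \<Lambda> (\<lambda>_. (borel :: spin measure))).
           AE \<omega> in \<mu>.
             real_cond_exp \<mu> (outside_algebra \<Lambda>) (\<lambda>\<omega>'. indicator A (restrict \<omega>' \<Lambda>)) \<omega>
             = (\<integral>\<sigma>. indicator A \<sigma> * boltz J1 J2 \<beta> \<Lambda> \<omega> \<sigma> \<partial>(Pi\<^sub>M \<Lambda> (\<lambda>_. spin_apriori)))
               / partition_fn J1 J2 \<beta> \<Lambda> \<omega>))"

end

theory Submission
  imports Defs
begin

text \<open>
  Flipping the sign of S^x on all four sites of a 2x2 block that no x-edge leaves does not change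
  the Hamiltonian of the block: the x-bonds inside the block see the sign change twice, and the
  z-bonds only involve S^z. The flip is a reflection of the circle, so it also preserves the a priori
  measure. By the DLR condition for this block, the law of S_r under mu is therefore invariant under
  S^x |-> -S^x, whence E(S^x_r) = 0; the z-component is handled in the same way with the blocks that
  no z-edge leaves. Spins lie on the unit circle almost surely, which gives integrability. No sign
  condition on J1, J2 or beta is needed.
\<close>

lemma distr_scale_measure:
  assumes "f \<in> measurable M N"
  shows "distr (scale_measure r M) N f = scale_measure r (distr M N f)"
  using assms
  by (intro measure_eqI)
    (auto simp: emeasure_distr space_scale_measure measurable_cong_sets[OF sets_scale_measure refl])

lemma distr_lborel_reflect: "distr lborel borel (\<lambda>x::real. t - x) = lborel"
proof -
  have "lborel = density (distr lborel borel (\<lambda>x::real. t + (-1) * x)) (\<lambda>_. ennreal \<bar>-1\<bar>)"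
    by (rule lborel_real_affine) simp
  then show ?thesis
    by (simp add: density_1)
qed

definition circle_reflection :: "real \<Rightarrow> real \<Rightarrow> real" where
  "circle_reflection a \<theta> = (if \<theta> \<le> a then a - \<theta> else a + 2*pi - \<theta>)"

lemma circle_reflection_measurable[measurable]: "circle_reflection a \<in> borel_measurable borel"
  unfolding circle_reflection_def by measurable

lemma circle_reflection_measurable_restrict_space:
  assumes "0 \<le> a" "a < 2*pi"
  shows "circle_reflection a
    \<in> measurable (restrict_space lborel {0..<2*pi}) (restrict_space lborel {0..<2*pi})"
  using assms by (intro measurable_restrict_space3) (auto simp: circle_reflection_def)

lemma emeasure_circle_reflection_vimage:
  assumes a: "0 \<le> a" "a < 2*pi" and S: "S \<in> sets borel"
  shows "emeasure lborel {\<theta>\<in>{0..<2*pi}. circle_reflection a \<theta> \<in> S} = emeasure lborel (S \<inter> {0..<2*pi})"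
proof -
  let ?S1 = "S \<inter> {0..a}" and ?S2 = "S \<inter> {a<..<2*pi}"
  have S12: "?S1 \<in> sets borel" "?S2 \<in> sets borel"
    using S by auto
  have pre: "(\<lambda>\<theta>. a - \<theta>) -` ?S1 \<in> sets borel" "(\<lambda>\<theta>. a + 2*pi - \<theta>) -` ?S2 \<in> sets borel"
    by (rule measurable_sets_borel[OF _ S12(1)] measurable_sets_borel[OF _ S12(2)]; measurable)+
  have "{\<theta>\<in>{0..<2*pi}. circle_reflection a \<theta> \<in> S} = (\<lambda>\<theta>. a - \<theta>) -` ?S1 \<union> (\<lambda>\<theta>. a + 2*pi - \<theta>) -` ?S2"
    using a by (auto simp: circle_reflection_def)
  also have "emeasure lborel \<dots>
      = emeasure lborel ((\<lambda>\<theta>. a - \<theta>) -` ?S1) + emeasure lborel ((\<lambda>\<theta>. a + 2*pi - \<theta>) -` ?S2)"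
    using pre a by (intro plus_emeasure[symmetric]) auto
  also have "\<dots> = emeasure (distr lborel borel (\<lambda>\<theta>. a - \<theta>)) ?S1
      + emeasure (distr lborel borel (\<lambda>\<theta>. a + 2*pi - \<theta>)) ?S2"
    using S12 by (simp add: emeasure_distr)
  also have "\<dots> = emeasure lborel (?S1 \<union> ?S2)"
    using S12 a by (simp only: distr_lborel_reflect) (intro plus_emeasure; auto)
  also have "?S1 \<union> ?S2 = S \<inter> {0..<2*pi}"
    using a by auto
  finally show ?thesis .
qed

lemma distr_circle_reflection:
  assumes a: "0 \<le> a" "a < 2*pi"
  defines "L \<equiv> restrict_space lborel {0..<2*pi}"
  shows "distr L L (circle_reflection a) = L"
proof (rule measure_eqI)
  fix X assume "X \<in> sets (distr L L (circle_reflection a))"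
  then have X: "X \<subseteq> {0..<2*pi}" "X \<in> sets borel"
    by (auto simp: L_def sets_restrict_space_iff)
  have maps: "circle_reflection a \<in> measurable L L"
    unfolding L_def using a by (rule circle_reflection_measurable_restrict_space)
  have "emeasure (distr L L (circle_reflection a)) X = emeasure L (circle_reflection a -` X \<inter> {0..<2*pi})"
    using maps X by (subst emeasure_distr) (auto simp: L_def space_restrict_space sets_restrict_space_iff)
  also have "\<dots> = emeasure lborel {\<theta>\<in>{0..<2*pi}. circle_reflection a \<theta> \<in> X}"
    unfolding L_def by (subst emeasure_restrict_space) (auto simp: Int_def conj_commute)
  also have "\<dots> = emeasure L X"
    unfolding emeasure_circle_reflection_vimage[OF a X(2)] L_def
    using X by (simp add: emeasure_restrict_space Int_absorb2)
  finally show "emeasure (distr L L (circle_reflection a)) X = emeasure L X" .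
qed simp

lemma sets_spin_apriori[simp, measurable_cong]: "sets spin_apriori = sets borel"
  by (simp add: spin_apriori_def)

lemma space_spin_apriori[simp]: "space spin_apriori = UNIV"
  by (simp add: spin_apriori_def space_scale_measure)

lemma emeasure_spin_apriori:
  assumes "Y \<in> sets borel"
  shows "emeasure spin_apriori Y
    = ennreal (sqrt (2*pi) / (2*pi)) * emeasure lborel ((\<lambda>\<theta>. (cos \<theta>, sin \<theta>)) -` Y \<inter> {0..<2*pi})"
proof -
  have "(\<lambda>\<theta>::real. (cos \<theta>, sin \<theta>)) \<in> measurable (restrict_space lborel {0..<2*pi}) borel"
    by (intro measurable_restrict_space1) simp
  with assms show ?thesis
    unfolding spin_apriori_def
    by (simp add: emeasure_distr space_restrict_space emeasure_restrict_space)
qed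

lemma finite_measure_spin_apriori: "finite_measure spin_apriori"
proof (rule finite_measureI)
  show "emeasure spin_apriori (space spin_apriori) \<noteq> \<infinity>"
    using emeasure_spin_apriori[of UNIV] by (simp add: ennreal_mult_eq_top_iff)
qed

lemma spin_apriori_reflection_invariant:
  assumes a: "0 \<le> a" "a < 2*pi" and [measurable]: "f \<in> borel_measurable borel"
    and f: "\<And>\<theta>. f (cos \<theta>, sin \<theta>) = (cos (circle_reflection a \<theta>), sin (circle_reflection a \<theta>))"
  shows "distr spin_apriori borel f = spin_apriori"
proof -
  define L where "L = restrict_space lborel {0..<2*pi}"
  let ?g = "\<lambda>\<theta>::real. (cos \<theta>, sin \<theta>)"
  have [measurable]: "?g \<in> measurable L borel"
    unfolding L_def by (intro measurable_restrict_space1) simp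
  have [measurable]: "circle_reflection a \<in> measurable L L"
    unfolding L_def using a by (rule circle_reflection_measurable_restrict_space)
  have "distr (distr L borel ?g) borel f = distr L borel (f \<circ> ?g)"
    by (rule distr_distr) measurable
  also have "\<dots> = distr L borel (?g \<circ> circle_reflection a)"
    by (rule distr_cong) (simp_all add: f)
  also have "\<dots> = distr (distr L L (circle_reflection a)) borel ?g"
    by (rule distr_distr[symmetric]) measurable
  also have "\<dots> = distr L borel ?g"
    using distr_circle_reflection[OF a] by (simp add: L_def)
  finally show ?thesis
    unfolding spin_apriori_def L_def by (simp add: distr_scale_measure)
qed

definition flip_x :: "spin \<Rightarrow> spin" where
  "flip_x s = (- fst s, snd s)"

definition flip_z :: "spin \<Rightarrow> spin" where
  "flip_z s = (fst s, - snd s)"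

lemma flip_x_measurable[measurable]: "flip_x \<in> borel_measurable borel"
  unfolding flip_x_def by (intro borel_measurable_continuous_onI continuous_intros)

lemma flip_z_measurable[measurable]: "flip_z \<in> borel_measurable borel"
  unfolding flip_z_def by (intro borel_measurable_continuous_onI continuous_intros)

lemma distr_spin_apriori_flip_x: "distr spin_apriori borel flip_x = spin_apriori"
  by (rule spin_apriori_reflection_invariant[of pi])
    (auto simp: flip_x_def circle_reflection_def cos_diff sin_diff)

lemma distr_spin_apriori_flip_z: "distr spin_apriori borel flip_z = spin_apriori"
  by (rule spin_apriori_reflection_invariant[of 0])
    (auto simp: flip_z_def circle_reflection_def cos_diff sin_diff)

lemma distr_PiM_compose_invariant:
  assumes I: "finite I" and M: "sigma_finite_measure M"
    and f[measurable]: "f \<in> measurable M M" and inv: "distr M M f = M"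
  shows "distr (PiM I (\<lambda>_. M)) (PiM I (\<lambda>_. M)) (compose I f) = PiM I (\<lambda>_. M)"
proof -
  interpret product_sigma_finite "\<lambda>_. M"
    using M by (simp add: product_sigma_finite_def)
  have [measurable]: "compose I f \<in> measurable (PiM I (\<lambda>_. M)) (PiM I (\<lambda>_. M))"
    unfolding compose_def by measurable
  show ?thesis
  proof (rule PiM_eqI[OF I])
    fix A assume A: "\<And>i. i \<in> I \<Longrightarrow> A i \<in> sets M"
    have "compose I f -` PiE I A \<inter> space (PiM I (\<lambda>_. M)) = PiE I (\<lambda>i. f -` A i \<inter> space M)"
      by (auto simp: space_PiM PiE_iff compose_def)
    then have "emeasure (distr (PiM I (\<lambda>_. M)) (PiM I (\<lambda>_. M)) (compose I f)) (PiE I A)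
        = emeasure (PiM I (\<lambda>_. M)) (PiE I (\<lambda>i. f -` A i \<inter> space M))"
      using A I by (subst emeasure_distr) (auto intro!: sets_PiM_I_finite)
    also have "\<dots> = (\<Prod>i\<in>I. emeasure M (f -` A i \<inter> space M))"
      using A by (intro emeasure_PiM I) auto
    also have "\<dots> = (\<Prod>i\<in>I. emeasure M (A i))"
      using A by (intro prod.cong refl) (subst (2) inv[symmetric], simp add: emeasure_distr)
    finally show "emeasure (distr (PiM I (\<lambda>_. M)) (PiM I (\<lambda>_. M)) (compose I f)) (PiE I A)
        = (\<Prod>i\<in>I. emeasure M (A i))" .
  qed simp
qed

lemma is_gibbsD:
  assumes "is_gibbs J1 J2 \<beta> \<mu>"
  shows "prob_space \<mu>" "sets \<mu> = sets config_space" "space \<mu> = UNIV"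
  using assms sets_eq_imp_space_eq[of \<mu> config_space]
  by (auto simp: is_gibbs_def config_space_def space_PiM)

lemma
  assumes "sets \<mu> = sets config_space"
  shows measurable_config_component: "(\<lambda>\<omega>. \<omega> r) \<in> measurable \<mu> (borel :: spin measure)"
    and measurable_config_restrict: "(\<lambda>\<omega>. restrict \<omega> P) \<in> measurable \<mu> (PiM P (\<lambda>_. borel :: spin measure))"
  unfolding measurable_cong_sets[OF assms refl] config_space_def
  by (simp_all add: measurable_restrict_subset)

lemma subalgebra_outside_algebra:
  assumes \<mu>: "sets \<mu> = sets config_space"
  shows "subalgebra \<mu> (outside_algebra P)"
proof -
  let ?G = "{{\<omega> \<in> space config_space. \<omega> r \<in> A} | r A. r \<notin> P \<and> A \<in> sets (borel :: spin measure)}"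
  have G: "?G \<subseteq> Pow (space config_space)"
    by auto
  have "?G \<subseteq> sets config_space"
    using measurable_config_component[of config_space] by (auto simp: Int_def conj_commute vimage_def
        dest: measurable_sets)
  then have "sets (outside_algebra P) \<subseteq> sets config_space"
    unfolding outside_algebra_def by (subst sigma_le_sets) auto
  then show ?thesis
    using sets_eq_imp_space_eq[OF \<mu>] G by (simp add: subalgebra_def \<mu> outside_algebra_def)
qed

lemma measure_restrict_eq_integral_cond_exp:
  assumes "prob_space \<mu>" and \<mu>: "sets \<mu> = sets config_space"
    and A: "A \<in> sets (PiM P (\<lambda>_. borel :: spin measure))"
  shows "measure \<mu> {\<omega>. restrict \<omega> P \<in> A}
    = (\<integral>\<omega>. real_cond_exp \<mu> (outside_algebra P) (\<lambda>\<omega>'. indicator A (restrict \<omega>' P)) \<omega> \<partial>\<mu>)"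
proof -
  interpret prob_space \<mu> by fact
  interpret finite_measure_subalgebra \<mu> "outside_algebra P"
    by unfold_locales (rule subalgebra_outside_algebra[OF \<mu>])
  have space: "space \<mu> = UNIV"
    using sets_eq_imp_space_eq[OF \<mu>] by (simp add: config_space_def space_PiM)
  have ind: "(\<lambda>\<omega>. indicator A (restrict \<omega> P) :: real) = indicator {\<omega>. restrict \<omega> P \<in> A}"
    by (auto simp: indicator_def)
  have S: "{\<omega>. restrict \<omega> P \<in> A} \<in> sets \<mu>"
    using measurable_sets[OF measurable_config_restrict[OF \<mu>] A] by (simp add: space vimage_def)
  have "integrable \<mu> (\<lambda>\<omega>. indicator A (restrict \<omega> P) :: real)"
    unfolding ind using S by (simp add: integrable_real_indicator emeasure_finite less_top[symmetric])
  then have "(\<integral>\<omega>. real_cond_exp \<mu> (outside_algebra P) (\<lambda>\<omega>'. indicator A (restrict \<omega>' P)) \<omega> \<partial>\<mu>)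
      = (\<integral>\<omega>. indicator A (restrict \<omega> P) \<partial>\<mu>)"
    by (rule real_cond_exp_int(2))
  also have "\<dots> = measure \<mu> {\<omega>. restrict \<omega> P \<in> A}"
    unfolding ind using space by simp
  finally show ?thesis ..
qed

lemma gibbs_measure_restrict_eq:
  assumes g: "is_gibbs J1 J2 \<beta> \<mu>" and P: "finite P"
    and A: "A \<in> sets (PiM P (\<lambda>_. borel :: spin measure))"
    and A': "A' \<in> sets (PiM P (\<lambda>_. borel :: spin measure))"
    and eq: "\<And>\<omega>. (\<integral>\<sigma>. indicator A \<sigma> * boltz J1 J2 \<beta> P \<omega> \<sigma> \<partial>(Pi\<^sub>M P (\<lambda>_. spin_apriori)))
              = (\<integral>\<sigma>. indicator A' \<sigma> * boltz J1 J2 \<beta> P \<omega> \<sigma> \<partial>(Pi\<^sub>M P (\<lambda>_. spin_apriori)))"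
  shows "measure \<mu> {\<omega>. restrict \<omega> P \<in> A} = measure \<mu> {\<omega>. restrict \<omega> P \<in> A'}"
proof -
  let ?ce = "\<lambda>X. real_cond_exp \<mu> (outside_algebra P) (\<lambda>\<omega>'. indicator X (restrict \<omega>' P))"
  let ?kernel = "\<lambda>X \<omega>. (\<integral>\<sigma>. indicator X \<sigma> * boltz J1 J2 \<beta> P \<omega> \<sigma> \<partial>(Pi\<^sub>M P (\<lambda>_. spin_apriori)))
    / partition_fn J1 J2 \<beta> P \<omega>"
  have "\<And>X. X \<in> sets (PiM P (\<lambda>_. borel :: spin measure)) \<Longrightarrow> AE \<omega> in \<mu>. ?ce X \<omega> = ?kernel X \<omega>"
    using g P unfolding is_gibbs_def by blast
  from this[OF A] this[OF A'] have "AE \<omega> in \<mu>. ?ce A \<omega> = ?ce A' \<omega>"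
    by eventually_elim (simp add: eq)
  then have "(\<integral>\<omega>. ?ce A \<omega> \<partial>\<mu>) = (\<integral>\<omega>. ?ce A' \<omega> \<partial>\<mu>)"
    by (intro integral_cong_AE borel_measurable_cond_exp2)
  then show ?thesis
    using is_gibbsD[OF g] by (simp add: measure_restrict_eq_integral_cond_exp A A')
qed

lemma spin_components_measurable[measurable]:
  "(fst :: spin \<Rightarrow> real) \<in> borel_measurable borel" "(snd :: spin \<Rightarrow> real) \<in> borel_measurable borel"
  by (intro borel_measurable_continuous_onI continuous_intros)+

lemma measurable_merge_cfg[measurable]:
  "(\<lambda>\<sigma>. merge_cfg P \<sigma> \<omega> s) \<in> measurable (PiM P (\<lambda>_. borel)) (borel :: spin measure)"
  by (cases "s \<in> P") (simp_all add: merge_cfg_def)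

lemma measurable_bond_merge_cfg[measurable]:
  "(\<lambda>\<sigma>. bond J1 J2 b (merge_cfg P \<sigma> \<omega> s) (merge_cfg P \<sigma> \<omega> t))
    \<in> borel_measurable (PiM P (\<lambda>_. borel :: spin measure))"
  unfolding bond_def by (cases b) simp_all

lemma measurable_boltz[measurable]:
  "boltz J1 J2 \<beta> P \<omega> \<in> borel_measurable (PiM P (\<lambda>_. borel :: spin measure))"
  unfolding boltz_def hamiltonian_def by measurable

lemma hamiltonian_flip_invariant:
  fixes f :: "spin \<Rightarrow> spin" and c :: bool
  assumes closed_h: "\<And>s. even (fst s) = c \<Longrightarrow> (s \<in> P \<longleftrightarrow> (fst s + 1, snd s) \<in> P)"
    and closed_v: "\<And>s. even (snd s) = c \<Longrightarrow> (s \<in> P \<longleftrightarrow> (fst s, snd s + 1) \<in> P)"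
    and bond_both: "\<And>x y. bond J1 J2 c (f x) (f y) = bond J1 J2 c x y"
    and bond_left: "\<And>x y. bond J1 J2 (\<not> c) (f x) y = bond J1 J2 (\<not> c) x y"
    and bond_right: "\<And>x y. bond J1 J2 (\<not> c) x (f y) = bond J1 J2 (\<not> c) x y"
  shows "hamiltonian J1 J2 P (merge_cfg P (\<lambda>i. f (\<sigma> i)) \<omega>) = hamiltonian J1 J2 P (merge_cfg P \<sigma> \<omega>)"
proof -
  have bond_eq: "bond J1 J2 b (merge_cfg P (\<lambda>i. f (\<sigma> i)) \<omega> s) (merge_cfg P (\<lambda>i. f (\<sigma> i)) \<omega> t)
           = bond J1 J2 b (merge_cfg P \<sigma> \<omega> s) (merge_cfg P \<sigma> \<omega> t)"
    if "b = c \<Longrightarrow> (s \<in> P \<longleftrightarrow> t \<in> P)" for b s t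
    using that bond_both bond_left bond_right by (cases "b = c") (auto simp: merge_cfg_def)
  show ?thesis unfolding hamiltonian_def
    by (intro arg_cong2[where f="(-)"] arg_cong[where f=uminus] sum.cong refl bond_eq)
       (use closed_h closed_v in auto)
qed

text \<open>plaquette 0 r (resp. plaquette 1 r) is the 2x2 block containing r that no x-edge (z-edge) leaves.\<close>

definition plaquette :: "int \<Rightarrow> site \<Rightarrow> site set" where
  "plaquette k r = {s. (fst s - k) div 2 = (fst r - k) div 2 \<and> (snd s - k) div 2 = (snd r - k) div 2}"

lemma plaquette_self: "r \<in> plaquette k r"
  by (simp add: plaquette_def)

lemma finite_plaquette: "finite (plaquette k r)"
proof (rule finite_subset)
  let ?a = "2 * ((fst r - k) div 2) + k" and ?b = "2 * ((snd r - k) div 2) + k"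
  show "plaquette k r \<subseteq> {?a..?a + 1} \<times> {?b..?b + 1}"
    unfolding plaquette_def by (auto; presburger)
qed simp

lemma plaquette_closed_horizontal:
  "even (fst s - k) \<Longrightarrow> s \<in> plaquette k r \<longleftrightarrow> (fst s + 1, snd s) \<in> plaquette k r"
  unfolding plaquette_def by (auto; presburger)

lemma plaquette_closed_vertical:
  "even (snd s - k) \<Longrightarrow> s \<in> plaquette k r \<longleftrightarrow> (fst s, snd s + 1) \<in> plaquette k r"
  unfolding plaquette_def by (auto; presburger)

lemma hamiltonian_flip_x_plaquette:
  "hamiltonian J1 J2 (plaquette 0 r) (merge_cfg (plaquette 0 r) (\<lambda>i. flip_x (\<sigma> i)) \<omega>)
    = hamiltonian J1 J2 (plaquette 0 r) (merge_cfg (plaquette 0 r) \<sigma> \<omega>)"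
  by (rule hamiltonian_flip_invariant[where c=True])
    (auto simp: plaquette_closed_horizontal plaquette_closed_vertical bond_def flip_x_def)

lemma hamiltonian_flip_z_plaquette:
  "hamiltonian J1 J2 (plaquette 1 r) (merge_cfg (plaquette 1 r) (\<lambda>i. flip_z (\<sigma> i)) \<omega>)
    = hamiltonian J1 J2 (plaquette 1 r) (merge_cfg (plaquette 1 r) \<sigma> \<omega>)"
  by (rule hamiltonian_flip_invariant[where c=False])
    (auto simp: plaquette_closed_horizontal plaquette_closed_vertical bond_def flip_z_def)

lemma sets_PiM_spin_apriori[measurable_cong]:
  "sets (PiM P (\<lambda>_. spin_apriori)) = sets (PiM P (\<lambda>_. borel :: spin measure))"
  by (rule sets_PiM_cong) auto

lemma integral_indicator_boltz_compose:
  assumes P: "finite P" and [measurable]: "f \<in> borel_measurable borel"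
    and inv: "distr spin_apriori borel f = spin_apriori"
    and H: "\<And>\<sigma>. hamiltonian J1 J2 P (merge_cfg P (\<lambda>i. f (\<sigma> i)) \<omega>) = hamiltonian J1 J2 P (merge_cfg P \<sigma> \<omega>)"
    and [measurable]: "A \<in> sets (PiM P (\<lambda>_. borel :: spin measure))"
  shows "(\<integral>\<sigma>. indicator A \<sigma> * boltz J1 J2 \<beta> P \<omega> \<sigma> \<partial>(Pi\<^sub>M P (\<lambda>_. spin_apriori)))
    = (\<integral>\<sigma>. indicator A (compose P f \<sigma>) * boltz J1 J2 \<beta> P \<omega> \<sigma> \<partial>(Pi\<^sub>M P (\<lambda>_. spin_apriori)))"
proof -
  let ?\<nu> = "PiM P (\<lambda>_. spin_apriori)"
  have [measurable]: "compose P f \<in> measurable ?\<nu> ?\<nu>"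
    unfolding compose_def by measurable
  have "distr spin_apriori spin_apriori f = spin_apriori"
    using inv by (simp cong: distr_cong)
  then have \<nu>: "distr ?\<nu> ?\<nu> (compose P f) = ?\<nu>"
    using finite_measure_spin_apriori
    by (intro distr_PiM_compose_invariant P) (auto simp: finite_measure_def)
  have boltz_compose: "boltz J1 J2 \<beta> P \<omega> (compose P f \<sigma>) = boltz J1 J2 \<beta> P \<omega> \<sigma>" for \<sigma>
  proof -
    have "merge_cfg P (compose P f \<sigma>) \<omega> = merge_cfg P (\<lambda>i. f (\<sigma> i)) \<omega>"
      by (auto simp: merge_cfg_def compose_def)
    then show ?thesis
      by (simp add: boltz_def H)
  qed
  have "(\<integral>\<sigma>. indicator A \<sigma> * boltz J1 J2 \<beta> P \<omega> \<sigma> \<partial>?\<nu>)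
      = (\<integral>\<sigma>. indicator A \<sigma> * boltz J1 J2 \<beta> P \<omega> \<sigma> \<partial>distr ?\<nu> ?\<nu> (compose P f))"
    by (simp only: \<nu>)
  also have "\<dots> = (\<integral>\<sigma>. indicator A (compose P f \<sigma>) * boltz J1 J2 \<beta> P \<omega> (compose P f \<sigma>) \<partial>?\<nu>)"
    by (rule integral_distr) measurable
  also have "\<dots> = (\<integral>\<sigma>. indicator A (compose P f \<sigma>) * boltz J1 J2 \<beta> P \<omega> \<sigma> \<partial>?\<nu>)"
    by (simp only: boltz_compose)
  finally show ?thesis .
qed

lemma site_event_measurable:
  assumes "r \<in> P" "B \<in> sets (borel :: spin measure)"
  shows "{\<sigma> \<in> space (PiM P (\<lambda>_. borel :: spin measure)). \<sigma> r \<in> B} \<in> sets (PiM P (\<lambda>_. borel))"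
  using assms by measurable

lemma restrict_in_site_event:
  assumes "r \<in> P"
  shows "{\<omega>. restrict \<omega> P \<in> {\<sigma> \<in> space (PiM P (\<lambda>_. borel :: spin measure)). \<sigma> r \<in> B}} = {\<omega>. \<omega> r \<in> B}"
  using assms by (auto simp: space_PiM)

lemma gibbs_distr_spin_flip:
  assumes g: "is_gibbs J1 J2 \<beta> \<mu>" and P: "finite P" and r: "r \<in> P"
    and [measurable]: "f \<in> borel_measurable borel" and inv: "distr spin_apriori borel f = spin_apriori"
    and H: "\<And>\<sigma> \<omega>. hamiltonian J1 J2 P (merge_cfg P (\<lambda>i. f (\<sigma> i)) \<omega>) = hamiltonian J1 J2 P (merge_cfg P \<sigma> \<omega>)"
  shows "distr \<mu> borel (\<lambda>\<omega>. f (\<omega> r)) = distr \<mu> borel (\<lambda>\<omega>. \<omega> r)"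
proof (rule measure_eqI)
  note gibbs = is_gibbsD[OF g]
  interpret prob_space \<mu> by (rule gibbs(1))
  have [measurable]: "(\<lambda>\<omega>. \<omega> r) \<in> measurable \<mu> borel"
    by (rule measurable_config_component[OF gibbs(2)])
  let ?event = "\<lambda>X. {\<sigma> \<in> space (PiM P (\<lambda>_. borel :: spin measure)). \<sigma> r \<in> X}"
  fix B :: "spin set" assume "B \<in> sets (distr \<mu> borel (\<lambda>\<omega>. f (\<omega> r)))"
  then have B[measurable]: "B \<in> sets borel"
    by simp
  have "measure \<mu> {\<omega>. restrict \<omega> P \<in> ?event (f -` B)} = measure \<mu> {\<omega>. restrict \<omega> P \<in> ?event B}"
  proof (rule gibbs_measure_restrict_eq[OF g P])
    fix \<omega>
    have "indicator (?event B) (compose P f \<sigma>) = (indicator (?event (f -` B)) \<sigma> :: real)"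
      if "\<sigma> \<in> space (PiM P (\<lambda>_. spin_apriori))" for \<sigma>
      using that r by (auto simp: indicator_def space_PiM compose_def)
    then show "(\<integral>\<sigma>. indicator (?event (f -` B)) \<sigma> * boltz J1 J2 \<beta> P \<omega> \<sigma> \<partial>(Pi\<^sub>M P (\<lambda>_. spin_apriori)))
      = (\<integral>\<sigma>. indicator (?event B) \<sigma> * boltz J1 J2 \<beta> P \<omega> \<sigma> \<partial>(Pi\<^sub>M P (\<lambda>_. spin_apriori)))"
      using r by (simp add: integral_indicator_boltz_compose[OF P _ inv H] cong: Bochner_Integration.integral_cong)
  qed (use r in measurable)
  then have "measure \<mu> {\<omega>. f (\<omega> r) \<in> B} = measure \<mu> {\<omega>. \<omega> r \<in> B}"
    unfolding restrict_in_site_event[OF r] by simp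
  then show "emeasure (distr \<mu> borel (\<lambda>\<omega>. f (\<omega> r))) B = emeasure (distr \<mu> borel (\<lambda>\<omega>. \<omega> r)) B"
    using gibbs(3) by (simp add: emeasure_distr emeasure_eq_measure vimage_def)
qed simp

lemma gibbs_AE_spin_not_in_null:
  assumes g: "is_gibbs J1 J2 \<beta> \<mu>" and B: "B \<in> sets borel" and null: "emeasure spin_apriori B = 0"
  shows "AE \<omega> in \<mu>. \<omega> r \<notin> B"
proof -
  note gibbs = is_gibbsD[OF g]
  interpret prob_space \<mu>
    by (rule gibbs(1))
  let ?event = "{\<sigma> \<in> space (PiM {r} (\<lambda>_. borel :: spin measure)). \<sigma> r \<in> B}"
  interpret product_sigma_finite "\<lambda>_::site. spin_apriori"
    using finite_measure_spin_apriori by (simp add: product_sigma_finite_def finite_measure_def)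
  have "?event = PiE {r} (\<lambda>_. B)"
    by (auto simp: space_PiM PiE_iff extensional_def)
  then have "emeasure (PiM {r} (\<lambda>_. spin_apriori)) ?event = 0"
    using B null by (simp add: emeasure_PiM)
  then have "?event \<in> null_sets (PiM {r} (\<lambda>_. spin_apriori))"
    using B by (intro null_setsI) (auto intro: site_event_measurable)
  then have "(\<integral>\<sigma>. indicator ?event \<sigma> * boltz J1 J2 \<beta> {r} \<omega> \<sigma> \<partial>(Pi\<^sub>M {r} (\<lambda>_. spin_apriori))) = 0" for \<omega>
    by (intro integral_eq_zero_AE) (auto elim!: AE_I' simp: indicator_def)
  then have "measure \<mu> {\<omega>. restrict \<omega> {r} \<in> ?event} = measure \<mu> {\<omega>. restrict \<omega> {r} \<in> {}}"
    using B by (intro gibbs_measure_restrict_eq[OF g]) (auto intro: site_event_measurable)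
  then have "measure \<mu> {\<omega>. \<omega> r \<in> B} = 0"
    unfolding restrict_in_site_event[OF singletonI] by simp
  moreover have "{\<omega>. \<omega> r \<in> B} \<in> sets \<mu>"
    using measurable_sets[OF measurable_config_component[OF gibbs(2)] B] gibbs(3)
    by (simp add: vimage_def)
  ultimately have "{\<omega>. \<omega> r \<in> B} \<in> null_sets \<mu>"
    by (simp add: null_sets_def emeasure_eq_measure)
  then show ?thesis
    by (rule AE_I') auto
qed

lemma integral_eq_zero_if_distr_flip_invariant:
  assumes X[measurable]: "X \<in> measurable M N" and [measurable]: "f \<in> measurable N N"
    and D: "distr M N (\<lambda>\<omega>. f (X \<omega>)) = distr M N X"
    and [measurable]: "h \<in> borel_measurable N"
    and odd: "\<And>s. s \<in> space N \<Longrightarrow> h (f s) = - h s"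
  shows "(\<integral>\<omega>. h (X \<omega>) \<partial>M) = (0 :: real)"
proof -
  have "(\<integral>\<omega>. h (X \<omega>) \<partial>M) = (\<integral>s. h s \<partial>distr M N X)"
    by (rule integral_distr[symmetric]) measurable
  also have "\<dots> = (\<integral>\<omega>. h (f (X \<omega>)) \<partial>M)"
    unfolding D[symmetric] by (rule integral_distr) measurable
  also have "\<dots> = (\<integral>\<omega>. - h (X \<omega>) \<partial>M)"
    using odd measurable_space[OF X] by (intro Bochner_Integration.integral_cong) auto
  finally show ?thesis
    by simp
qed

lemma emeasure_spin_apriori_outside_unit_ball: "emeasure spin_apriori (- cball 0 1) = 0"
proof -
  have "(\<lambda>\<theta>::real. (cos \<theta>, sin \<theta>)) -` (- cball 0 1) = {}"
    by (auto simp: norm_Pair real_norm_def)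
  then show ?thesis
    by (simp add: emeasure_spin_apriori)
qed

lemma gibbs_distr_flip_x:
  assumes "is_gibbs J1 J2 \<beta> \<mu>"
  shows "distr \<mu> borel (\<lambda>\<omega>. flip_x (\<omega> r)) = distr \<mu> borel (\<lambda>\<omega>. \<omega> r)"
  using assms finite_plaquette plaquette_self flip_x_measurable distr_spin_apriori_flip_x
    hamiltonian_flip_x_plaquette by (rule gibbs_distr_spin_flip)

lemma gibbs_distr_flip_z:
  assumes "is_gibbs J1 J2 \<beta> \<mu>"
  shows "distr \<mu> borel (\<lambda>\<omega>. flip_z (\<omega> r)) = distr \<mu> borel (\<lambda>\<omega>. \<omega> r)"
  using assms finite_plaquette plaquette_self flip_z_measurable distr_spin_apriori_flip_z
    hamiltonian_flip_z_plaquette by (rule gibbs_distr_spin_flip)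

theorem theorem2p2:
  fixes J1 J2 \<beta> :: real and \<mu> :: "config measure"
  assumes "J1 \<ge> 0" and "J2 \<ge> 0" and "\<beta> \<ge> 0"
    and "is_gibbs J1 J2 \<beta> \<mu>"
  shows "\<forall>r. integrable \<mu> (\<lambda>\<omega>. \<omega> r) \<and> (\<integral>\<omega>. \<omega> r \<partial>\<mu>) = (0 :: spin)"
proof
  fix r
  note gibbs = is_gibbsD[OF assms(4)]
  interpret prob_space \<mu>
    by (rule gibbs(1))
  have spin[measurable]: "(\<lambda>\<omega>. \<omega> r) \<in> measurable \<mu> borel"
    by (rule measurable_config_component[OF gibbs(2)])
  have "AE \<omega> in \<mu>. \<omega> r \<notin> - cball 0 1"
    by (rule gibbs_AE_spin_not_in_null[OF assms(4) _ emeasure_spin_apriori_outside_unit_ball]) simp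
  then have integrable: "integrable \<mu> (\<lambda>\<omega>. \<omega> r)"
    by (intro Bochner_Integration.integrable_bound[OF integrable_const[of "1::real"] spin])
      (auto elim!: eventually_mono)
  have "(\<integral>\<omega>. fst (\<omega> r) \<partial>\<mu>) = 0"
    using gibbs_distr_flip_x[OF assms(4)]
    by (rule integral_eq_zero_if_distr_flip_invariant[OF spin flip_x_measurable])
      (simp_all add: flip_x_def)
  moreover have "(\<integral>\<omega>. snd (\<omega> r) \<partial>\<mu>) = 0"
    using gibbs_distr_flip_z[OF assms(4)]
    by (rule integral_eq_zero_if_distr_flip_invariant[OF spin flip_z_measurable])
      (simp_all add: flip_z_def)
  ultimately show "integrable \<mu> (\<lambda>\<omega>. \<omega> r) \<and> (\<integral>\<omega>. \<omega> r \<partial>\<mu>) = (0 :: spin)"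
    using integrable by (simp add: prod_eq_iff integral_fst integral_snd)
qed

end
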